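(* Let $\mathfrak{q}$ be a $\mathrm{Lie}$-nilpotent Leibniz algebra of class $k$ and let $0\to\mathfrak{n}\to\mathfrak{g}\xrightarrow{\pi}\mathfrak{q}\to0$ be a $\mathrm{Lie}$-central extension. Fix a free presentation $0\to\mathfrak{r}\to\mathfrak{f}\xrightarrow{\rho}\mathfrak{g}\to0$, put $\mathfrak{s}=\ker(\pi\circ\rho)$, so that $\mathcal{M}^{\mathrm{Lie}}(\mathfrak{q})=\frac{\mathfrak{s}\cap[\mathfrak{f},\mathfrak{f}]_{\mathrm{Lie}}}{[\mathfrak{f},\mathfrak{s}]_{\mathrm{Lie}}}$, and let $\theta:\mathcal{M}^{\mathrm{Lie}}(\mathfrak{q})\to\mathfrak{n}$ be $\theta(x+[\mathfrak{f},\mathfrak{s}]_{\mathrm{Lie}})=\rho(x)$. Let $\tau:\mathcal{M}^{\mathrm{Lie}}(\mathfrak{q})\to\mathcal{M}^{\mathrm{Lie}}(\mathfrak{q}/\mathfrak{q}^{[k]})$ be the map induced by the canonical projection $\mathfrak{q}\twoheadrightarrow\mathfrak{q}/\mathfrak{q}^{[k]}$ (concretely, with $\mathfrak{t}=\ker(\mathfrak{f}\to\mathfrak{q}/\mathfrak{q}^{[k]})$, $\tau(x+[\mathfrak{f},\mathfrak{s}]_{\mathrm{Lie}})=x+[\mathfrak{f},\mathfrak{t}]_{\mathrm{Lie}}$). Then $\mathfrak{g}$ is $\mathrm{Lie}$-nilpotent of class $k$ if and only if $\theta$ vanishes on $\ker(\tau)$.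
   Context: Fix a field $\mathbb{K}$ with $\frac12\in\mathbb{K}$. A Leibniz algebra is a $\mathbb{K}$-vector space with a bilinear bracket satisfying $[x,[y,z]]=[[x,y],z]-[[x,z],y]$. For two-sided ideals $\mathfrak{m},\mathfrak{n}$, $[\mathfrak{m},\mathfrak{n}]_{\mathrm{Lie}}$ is the subspace spanned by all $[m,n]+[n,m]$. $Z_{\mathrm{Lie}}(\mathfrak{g})=\{z:[q,z]+[z,q]=0\ \forall q\}$; a surjection $\mathfrak{g}\to\mathfrak{q}$ is a $\mathrm{Lie}$-central extension if its kernel lies in $Z_{\mathrm{Lie}}(\mathfrak{g})$. Lower $\mathrm{Lie}$-central series: $\mathfrak{h}^{[1]}=\mathfrak{h}$, $\mathfrak{h}^{[i]}=[\mathfrak{h}^{[i-1]},\mathfrak{h}]_{\mathrm{Lie}}$; class $k$ means $\mathfrak{h}^{[k+1]}=0\ne\mathfrak{h}^{[k]}$. For a free presentation $0\to\mathfrak{r}\to\mathfrak{f}\to\mathfrak{g}\to0$ ($\mathfrak{f}$ free Leibniz), $\mathcal{M}^{\mathrm{Lie}}(\mathfrak{g})=\frac{\mathfrak{r}\cap[\mathfrak{f},\mathfrak{f}]_{\mathrm{Lie}}}{[\mathfrak{f},\mathfrak{r}]_{\mathrm{Lie}}}$, independent of the presentation up to isomorphism. *)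

theory Defs
  imports Main
begin

text \<open>A Leibniz algebra over a field 'k is modelled on a whole type 'a (an additive
abelian group) with a scalar multiplication sc and a bracket br.\<close>

definition vspace :: "('k::field \<Rightarrow> 'a::ab_group_add \<Rightarrow> 'a) \<Rightarrow> bool" where
  "vspace sc \<longleftrightarrow>
     (\<forall>a x y. sc a (x + y) = sc a x + sc a y) \<and>
     (\<forall>a b x. sc (a + b) x = sc a x + sc b x) \<and>
     (\<forall>a b x. sc a (sc b x) = sc (a * b) x) \<and>
     (\<forall>x. sc 1 x = x)"

definition leibniz ::
  "('k::field \<Rightarrow> 'a::ab_group_add \<Rightarrow> 'a) \<Rightarrow> ('a \<Rightarrow> 'a \<Rightarrow> 'a) \<Rightarrow> bool" where
  "leibniz sc br \<longleftrightarrow> vspace sc \<and>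
     (\<forall>x y z. br (x + y) z = br x z + br y z) \<and>
     (\<forall>x y z. br x (y + z) = br x y + br x z) \<and>
     (\<forall>a x y. br (sc a x) y = sc a (br x y)) \<and>
     (\<forall>a x y. br x (sc a y) = sc a (br x y)) \<and>
     (\<forall>x y z. br x (br y z) = br (br x y) z - br (br x z) y)"

definition lsubspace :: "('k::field \<Rightarrow> 'a::ab_group_add \<Rightarrow> 'a) \<Rightarrow> 'a set \<Rightarrow> bool" where
  "lsubspace sc A \<longleftrightarrow> 0 \<in> A \<and> (\<forall>x\<in>A. \<forall>y\<in>A. x + y \<in> A) \<and> (\<forall>c. \<forall>x\<in>A. sc c x \<in> A)"

definition lspan :: "('k::field \<Rightarrow> 'a::ab_group_add \<Rightarrow> 'a) \<Rightarrow> 'a set \<Rightarrow> 'a set" where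
  "lspan sc S = \<Inter>{A. lsubspace sc A \<and> S \<subseteq> A}"

definition lin_indep :: "('k::field \<Rightarrow> 'a::ab_group_add \<Rightarrow> 'a) \<Rightarrow> 'a set \<Rightarrow> bool" where
  "lin_indep sc S \<longleftrightarrow>
     (\<forall>T c. finite T \<longrightarrow> T \<subseteq> S \<longrightarrow> (\<Sum>v\<in>T. sc (c v) v) = 0 \<longrightarrow> (\<forall>v\<in>T. c v = 0))"

definition lie_br_set ::
  "('k::field \<Rightarrow> 'a::ab_group_add \<Rightarrow> 'a) \<Rightarrow> ('a \<Rightarrow> 'a \<Rightarrow> 'a) \<Rightarrow> 'a set \<Rightarrow> 'a set \<Rightarrow> 'a set" where
  "lie_br_set sc br M N = lspan sc {br m n + br n m | m n. m \<in> M \<and> n \<in> N}"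

definition lie_center ::
  "('a::ab_group_add \<Rightarrow> 'a \<Rightarrow> 'a) \<Rightarrow> 'a set" where
  "lie_center br = {z. \<forall>q. br q z + br z q = 0}"

text \<open>lcs0 sc br i = h^[i+1].\<close>
primrec lcs0 ::
  "('k::field \<Rightarrow> 'a::ab_group_add \<Rightarrow> 'a) \<Rightarrow> ('a \<Rightarrow> 'a \<Rightarrow> 'a) \<Rightarrow> nat \<Rightarrow> 'a set" where
  "lcs0 sc br 0 = UNIV"
| "lcs0 sc br (Suc i) = lie_br_set sc br (lcs0 sc br i) UNIV"

definition lower_lie_central ::
  "('k::field \<Rightarrow> 'a::ab_group_add \<Rightarrow> 'a) \<Rightarrow> ('a \<Rightarrow> 'a \<Rightarrow> 'a) \<Rightarrow> nat \<Rightarrow> 'a set" where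
  "lower_lie_central sc br i = lcs0 sc br (i - 1)"

definition lie_nilpotent_class ::
  "('k::field \<Rightarrow> 'a::ab_group_add \<Rightarrow> 'a) \<Rightarrow> ('a \<Rightarrow> 'a \<Rightarrow> 'a) \<Rightarrow> nat \<Rightarrow> bool" where
  "lie_nilpotent_class sc br k \<longleftrightarrow> 1 \<le> k \<and>
     lower_lie_central sc br (k + 1) = {0} \<and> lower_lie_central sc br k \<noteq> {0}"

definition leib_hom ::
  "('k::field \<Rightarrow> 'a::ab_group_add \<Rightarrow> 'a) \<Rightarrow> ('a \<Rightarrow> 'a \<Rightarrow> 'a) \<Rightarrow>
   ('k \<Rightarrow> 'b::ab_group_add \<Rightarrow> 'b) \<Rightarrow> ('b \<Rightarrow> 'b \<Rightarrow> 'b) \<Rightarrow> ('a \<Rightarrow> 'b) \<Rightarrow> bool" where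
  "leib_hom sc1 br1 sc2 br2 h \<longleftrightarrow>
     (\<forall>x y. h (x + y) = h x + h y) \<and> (\<forall>c x. h (sc1 c x) = sc2 c (h x)) \<and>
     (\<forall>x y. h (br1 x y) = br2 (h x) (h y))"

fun lnorm :: "('a \<Rightarrow> 'a \<Rightarrow> 'a) \<Rightarrow> 'a \<Rightarrow> 'a list \<Rightarrow> 'a" where
  "lnorm br x [] = x"
| "lnorm br x (y # ys) = lnorm br (br x y) ys"

text \<open>This is the standard basis of the free (right) Leibniz algebra
(the reduced tensor algebra on span X).\<close>
definition free_leibniz ::
  "('k::field \<Rightarrow> 'a::ab_group_add \<Rightarrow> 'a) \<Rightarrow> ('a \<Rightarrow> 'a \<Rightarrow> 'a) \<Rightarrow> bool" where
  "free_leibniz sc br \<longleftrightarrow> leibniz sc br \<and>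
     (\<exists>X. let W = {(x, ys). x \<in> X \<and> set ys \<subseteq> X};
              B = (\<lambda>(x, ys). lnorm br x ys) ` W
          in inj_on (\<lambda>(x, ys). lnorm br x ys) W \<and> lin_indep sc B \<and> lspan sc B = UNIV)"

end

theory Submission
  imports Defs "HOL.Modules"
begin

text \<open>The bracket \<open>[f, t]\<^sub>L\<^sub>i\<^sub>e\<close> is mapped by \<open>\<rho>\<close> onto \<open>[g, \<pi>\<inverse>(q\<^bsup>[k]\<^esup>)]\<^sub>L\<^sub>i\<^sub>e\<close>. Since \<open>\<pi>\<close>
  maps \<open>g\<^bsup>[k]\<^esup>\<close> onto \<open>q\<^bsup>[k]\<^esup>\<close>, the preimage \<open>\<pi>\<inverse>(q\<^bsup>[k]\<^esup>)\<close> is \<open>g\<^bsup>[k]\<^esup> + n\<close>, and the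
  Lie-central kernel \<open>n\<close> contributes nothing to the bracket; hence \<open>\<rho>([f, t]\<^sub>L\<^sub>i\<^sub>e) = g\<^bsup>[k+1]\<^esup>\<close>.
  As \<open>[f, t]\<^sub>L\<^sub>i\<^sub>e \<subseteq> s \<inter> [f, f]\<^sub>L\<^sub>i\<^sub>e\<close>, the condition on \<open>\<theta>\<close> says exactly \<open>g\<^bsup>[k+1]\<^esup> = 0\<close>, while
  \<open>g\<^bsup>[k]\<^esup> \<noteq> 0\<close> holds anyway because its image \<open>q\<^bsup>[k]\<^esup>\<close> is nonzero.\<close>

lemma lsubspace_lspan: "lsubspace sc (lspan sc S)"
  unfolding lspan_def lsubspace_def by auto

lemma lspan_superset: "S \<subseteq> lspan sc S"
  unfolding lspan_def by auto

lemma lspan_least: "lsubspace sc A \<Longrightarrow> S \<subseteq> A \<Longrightarrow> lspan sc S \<subseteq> A"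
  unfolding lspan_def by auto

lemma lspan_mono: "S \<subseteq> T \<Longrightarrow> lspan sc S \<subseteq> lspan sc T"
  by (meson lspan_least lspan_superset lsubspace_lspan order_trans)

lemma zero_in_lspan: "0 \<in> lspan sc S"
  using lsubspace_lspan unfolding lsubspace_def by blast

lemma leib_hom_additive: "leib_hom sc1 br1 sc2 br2 h \<Longrightarrow> additive h"
  unfolding leib_hom_def additive_def by blast

lemma image_lspan:
  assumes add: "additive h" and scale: "\<And>c x. h (sc1 c x) = sc2 c (h x)"
  shows "h ` lspan sc1 S = lspan sc2 (h ` S)"
proof
  have "lsubspace sc1 (h -` lspan sc2 (h ` S))"
    using lsubspace_lspan[of sc2 "h ` S"]
    by (simp add: lsubspace_def additive.zero[OF add] additive.add[OF add] scale)
  then have "lspan sc1 S \<subseteq> h -` lspan sc2 (h ` S)"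
    by (rule lspan_least) (use lspan_superset in blast)
  then show "h ` lspan sc1 S \<subseteq> lspan sc2 (h ` S)"
    by blast
next
  have L: "lsubspace sc1 (lspan sc1 S)"
    by (rule lsubspace_lspan)
  have "lsubspace sc2 (h ` lspan sc1 S)"
    unfolding lsubspace_def
  proof (intro conjI ballI allI)
    show "0 \<in> h ` lspan sc1 S"
      using L additive.zero[OF add] unfolding lsubspace_def by force
  next
    fix x y assume "x \<in> h ` lspan sc1 S" "y \<in> h ` lspan sc1 S"
    then obtain a b where "a \<in> lspan sc1 S" "b \<in> lspan sc1 S" "x = h a" "y = h b"
      by blast
    moreover have "a + b \<in> lspan sc1 S"
      using L calculation unfolding lsubspace_def by blast
    ultimately show "x + y \<in> h ` lspan sc1 S"
      by (metis additive.add[OF add] imageI)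
  next
    fix c x assume "x \<in> h ` lspan sc1 S"
    then obtain a where "a \<in> lspan sc1 S" "x = h a"
      by blast
    moreover have "sc1 c a \<in> lspan sc1 S"
      using L calculation unfolding lsubspace_def by blast
    ultimately show "sc2 c x \<in> h ` lspan sc1 S"
      by (metis scale imageI)
  qed
  then show "lspan sc2 (h ` S) \<subseteq> h ` lspan sc1 S"
    by (rule lspan_least) (use lspan_superset in blast)
qed

lemma image_lie_br_set:
  assumes "leib_hom sc1 br1 sc2 br2 h"
  shows "h ` lie_br_set sc1 br1 M N = lie_br_set sc2 br2 (h ` M) (h ` N)"
proof -
  have add: "additive h"
    using assms by (rule leib_hom_additive)
  have scale: "\<And>c x. h (sc1 c x) = sc2 c (h x)" and br: "\<And>x y. h (br1 x y) = br2 (h x) (h y)"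
    using assms unfolding leib_hom_def by simp_all
  have "h ` {br1 m n + br1 n m | m n. m \<in> M \<and> n \<in> N} =
        {br2 m n + br2 n m | m n. m \<in> h ` M \<and> n \<in> h ` N}" (is "?L = ?R")
  proof (intro equalityI subsetI)
    fix v assume "v \<in> ?L"
    then obtain m n where "m \<in> M" "n \<in> N" "v = br2 (h m) (h n) + br2 (h n) (h m)"
      unfolding br[symmetric] additive.add[OF add, symmetric] by blast
    then show "v \<in> ?R"
      by blast
  next
    fix v assume "v \<in> ?R"
    then obtain m n where mn: "m \<in> M" "n \<in> N" and "v = br2 (h m) (h n) + br2 (h n) (h m)"
      by blast
    then have "v = h (br1 m n + br1 n m)"
      by (simp add: additive.add[OF add] br)
    with mn show "v \<in> ?L"
      by blast
  qed
  moreover have "h ` lspan sc1 G = lspan sc2 (h ` G)" for G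
    using add scale by (rule image_lspan)
  ultimately show ?thesis
    unfolding lie_br_set_def by simp
qed

lemma lie_br_set_commute: "lie_br_set sc br M N = lie_br_set sc br N M"
proof -
  have "{br m n + br n m | m n. m \<in> M \<and> n \<in> N} = {br m n + br n m | m n. m \<in> N \<and> n \<in> M}"
    by (auto simp: add.commute) (metis add.commute)+
  then show ?thesis
    unfolding lie_br_set_def by simp
qed

lemma image_lcs0:
  assumes "leib_hom sc1 br1 sc2 br2 h" "surj h"
  shows "h ` lcs0 sc1 br1 i = lcs0 sc2 br2 i"
  by (induction i) (simp_all add: assms image_lie_br_set[OF assms(1)])

lemma lcs0_Suc_commute: "lcs0 sc br (Suc i) = lie_br_set sc br UNIV (lcs0 sc br i)"
  by (simp add: lie_br_set_commute)

lemma lie_br_set_vimage_central: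
  assumes br_add: "\<And>x y z. br x (y + z) = br x y + br x z"
    and add_br: "\<And>x y z. br (x + y) z = br x z + br y z"
    and add: "additive \<pi>" and central: "{x. \<pi> x = 0} \<subseteq> lie_center br"
  shows "lie_br_set sc br M (\<pi> -` (\<pi> ` N)) = lie_br_set sc br M N"
proof -
  have "br m n + br n m \<in> {br m n + br n m | m n. m \<in> M \<and> n \<in> N}"
    if "m \<in> M" "a \<in> N" "\<pi> n = \<pi> a" for m n a
  proof -
    have "\<pi> (n - a) = 0"
      using that(3) by (simp add: additive.diff[OF add])
    then have central_part: "br m (n - a) + br (n - a) m = 0"
      using central unfolding lie_center_def by blast
    have "br m n + br n m = br m (a + (n - a)) + br (a + (n - a)) m"
      by simp
    also have "\<dots> = (br m a + br a m) + (br m (n - a) + br (n - a) m)"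
      by (simp only: br_add add_br ac_simps)
    also have "\<dots> = br m a + br a m"
      by (simp add: central_part)
    finally show ?thesis
      using that by blast
  qed
  then have "{br m n + br n m | m n. m \<in> M \<and> n \<in> \<pi> -` (\<pi> ` N)} =
             {br m n + br n m | m n. m \<in> M \<and> n \<in> N}"
    by blast
  then show ?thesis
    unfolding lie_br_set_def by simp
qed

lemma lcs0_Suc_central_extension:
  assumes leib: "leibniz sc br" and hom: "leib_hom sc br sc' br' \<pi>" "surj \<pi>"
    and central: "{x. \<pi> x = 0} \<subseteq> lie_center br"
  shows "lcs0 sc br (Suc i) = lie_br_set sc br UNIV (\<pi> -` lcs0 sc' br' i)"
proof -
  have "lie_br_set sc br UNIV (\<pi> -` lcs0 sc' br' i) = lie_br_set sc br UNIV (\<pi> -` (\<pi> ` lcs0 sc br i))"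
    by (simp only: image_lcs0[OF hom])
  also have "\<dots> = lie_br_set sc br UNIV (lcs0 sc br i)"
    using leib by (intro lie_br_set_vimage_central leib_hom_additive[OF hom(1)] central)
      (simp_all add: leibniz_def)
  finally show ?thesis
    unfolding lcs0_Suc_commute by (rule sym)
qed

lemma lie_nilpotent_class_iff_of_surj:
  assumes h: "leib_hom sc1 br1 sc2 br2 h" "surj h" and q_nil: "lie_nilpotent_class sc2 br2 k"
  shows "lie_nilpotent_class sc1 br1 k \<longleftrightarrow> lcs0 sc1 br1 k = {0}"
proof -
  have k_pos: "1 \<le> k" and qk: "lcs0 sc2 br2 (k - 1) \<noteq> {0}"
    using q_nil unfolding lie_nilpotent_class_def lower_lie_central_def by auto
  have "lcs0 sc1 br1 (k - 1) \<noteq> {0}"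
    using qk image_lcs0[OF h, of "k - 1"] additive.zero[OF leib_hom_additive[OF h(1)]] by auto
  then show ?thesis
    using k_pos unfolding lie_nilpotent_class_def lower_lie_central_def by simp
qed

theorem mainTheorem9:
  fixes scf :: "'k::field \<Rightarrow> 'f::ab_group_add \<Rightarrow> 'f" and brf :: "'f \<Rightarrow> 'f \<Rightarrow> 'f"
    and scg :: "'k \<Rightarrow> 'g::ab_group_add \<Rightarrow> 'g" and brg :: "'g \<Rightarrow> 'g \<Rightarrow> 'g"
    and scq :: "'k \<Rightarrow> 'q::ab_group_add \<Rightarrow> 'q" and brq :: "'q \<Rightarrow> 'q \<Rightarrow> 'q"
    and \<pi> :: "'g \<Rightarrow> 'q" and \<rho> :: "'f \<Rightarrow> 'g" and k :: nat
  assumes char: "(2::'k) \<noteq> 0"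
    and q_leib: "leibniz scq brq"
    and g_leib: "leibniz scg brg"
    and f_free: "free_leibniz scf brf"
    and q_nil: "lie_nilpotent_class scq brq k"
    and \<pi>_hom: "leib_hom scg brg scq brq \<pi>" and \<pi>_surj: "surj \<pi>"
    and \<pi>_central: "{x. \<pi> x = 0} \<subseteq> lie_center brg"
    and \<rho>_hom: "leib_hom scf brf scg brg \<rho>" and \<rho>_surj: "surj \<rho>"
  shows "lie_nilpotent_class scg brg k \<longleftrightarrow>
    (let s = {x. \<pi> (\<rho> x) = 0};
         t = {x. \<pi> (\<rho> x) \<in> lower_lie_central scq brq k}
     in \<forall>x \<in> s \<inter> lie_br_set scf brf UNIV UNIV \<inter> lie_br_set scf brf UNIV t. \<rho> x = 0)"
proof -
  define s where "s = {x. \<pi> (\<rho> x) = 0}"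
  define t where "t = {x. \<pi> (\<rho> x) \<in> lower_lie_central scq brq k}"
  have k_pos: "Suc (k - 1) = k" and qk: "lcs0 scq brq k = {0}"
    using q_nil unfolding lie_nilpotent_class_def lower_lie_central_def by auto
  have "t = \<rho> -` \<pi> -` lcs0 scq brq (k - 1)"
    unfolding t_def lower_lie_central_def by auto
  then have "\<rho> ` lie_br_set scf brf UNIV t = lie_br_set scg brg UNIV (\<pi> -` lcs0 scq brq (k - 1))"
    by (simp add: image_lie_br_set[OF \<rho>_hom] \<rho>_surj surj_image_vimage_eq)
  also have "\<dots> = lcs0 scg brg k"
    using lcs0_Suc_central_extension[OF g_leib \<pi>_hom \<pi>_surj \<pi>_central, of "k - 1"] k_pos by simp
  finally have \<rho>_bracket: "\<rho> ` lie_br_set scf brf UNIV t = lcs0 scg brg k" .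
  have "lie_br_set scf brf UNIV t \<subseteq> s"
    using \<rho>_bracket image_lcs0[OF \<pi>_hom \<pi>_surj, of k] qk unfolding s_def by auto
  moreover have "lie_br_set scf brf UNIV t \<subseteq> lie_br_set scf brf UNIV UNIV"
    unfolding lie_br_set_def by (rule lspan_mono) blast
  moreover have "0 \<in> lie_br_set scf brf UNIV t"
    unfolding lie_br_set_def by (rule zero_in_lspan)
  ultimately show ?thesis
    unfolding Let_def s_def[symmetric] t_def[symmetric]
      lie_nilpotent_class_iff_of_surj[OF \<pi>_hom \<pi>_surj q_nil] \<rho>_bracket[symmetric]
    by (auto 0 3)
qed

end
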